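(* Let $\mu\neq0$ and let $\gamma$ be an arc-length parametrized curve in $\mathbb M^2(\rho)$ whose curvature $\kappa$ is non-constant and satisfies $\frac{d^2}{ds^2}(e^{\mu\kappa})+(\kappa^2-\kappa/\mu+\rho)e^{\mu\kappa}=0$. Then there is a constant $d\in\mathbb R$ such that $$\mu^4\kappa_s^2=d\,e^{-2\mu\kappa}-(\mu\kappa-1)^2-\rho\mu^2 .$$
   Context: $\mathbb M^2(\rho)$ is the simply connected complete surface of constant curvature $\rho$; $\kappa$ is the signed geodesic curvature of $\gamma$ and $\kappa_s$ its derivative with respect to arc-length $s$. *)

theory Defs
  imports "HOL-Analysis.Analysis"
begin

end

theory Submission
  imports Defs
begin

(* With u = exp (\<mu> \<kappa>) one has u'' = \<mu> (\<kappa>'' + \<mu> \<kappa>'^2) u, so dividing the equation by u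
   leaves a second order ODE for \<kappa> that is autonomous.  Multiplying it by 2 \<mu>^2 \<kappa>' exp (2 \<mu> \<kappa>)
   makes it an exact derivative: the energy exp (2 \<mu> \<kappa>) (\<mu>^4 \<kappa>'^2 + (\<mu> \<kappa> - 1)^2 + \<rho> \<mu>^2)
   is constant on the (connected) parameter interval, and d is that constant. *)

lemma deriv2_exp_scaled:
  fixes \<mu> :: real and \<kappa> \<kappa>' :: "real \<Rightarrow> real" and \<kappa>'' :: real
  assumes "open I" "s \<in> I"
    and "\<And>t. t \<in> I \<Longrightarrow> (\<kappa> has_real_derivative \<kappa>' t) (at t)"
    and "(\<kappa>' has_real_derivative \<kappa>'') (at s)"
  shows "deriv (deriv (\<lambda>t. exp (\<mu> * \<kappa> t))) s
           = \<mu> * (\<kappa>'' + \<mu> * (\<kappa>' s)\<^sup>2) * exp (\<mu> * \<kappa> s)"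
proof -
  have first: "deriv (\<lambda>t. exp (\<mu> * \<kappa> t)) t = \<mu> * \<kappa>' t * exp (\<mu> * \<kappa> t)" if "t \<in> I" for t
    by (rule DERIV_imp_deriv) (rule derivative_eq_intros assms(3)[OF that] refl | simp)+
  have "((\<lambda>t. \<mu> * \<kappa>' t * exp (\<mu> * \<kappa> t)) has_real_derivative
          \<mu> * \<kappa>'' * exp (\<mu> * \<kappa> s) + \<mu> * \<kappa>' s * (\<mu> * \<kappa>' s * exp (\<mu> * \<kappa> s))) (at s)"
    by (rule derivative_eq_intros assms(3)[OF \<open>s \<in> I\<close>] assms(4) refl | simp)+
  then have "(deriv (\<lambda>t. exp (\<mu> * \<kappa> t)) has_real_derivative
          \<mu> * \<kappa>'' * exp (\<mu> * \<kappa> s) + \<mu> * \<kappa>' s * (\<mu> * \<kappa>' s * exp (\<mu> * \<kappa> s))) (at s)"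
    by (rule has_field_derivative_transform_within_open[OF _ assms(1,2)]) (simp add: first)
  then show ?thesis
    by (simp add: DERIV_imp_deriv algebra_simps power2_eq_square)
qed

lemma reduce_curvature_ode:
  fixes \<mu> \<rho> :: real and \<kappa> \<kappa>' :: "real \<Rightarrow> real" and \<kappa>'' :: real
  assumes "\<mu> \<noteq> 0" "open I" "s \<in> I"
    and "\<And>t. t \<in> I \<Longrightarrow> (\<kappa> has_real_derivative \<kappa>' t) (at t)"
    and "(\<kappa>' has_real_derivative \<kappa>'') (at s)"
    and "deriv (deriv (\<lambda>t. exp (\<mu> * \<kappa> t))) s
           + ((\<kappa> s)\<^sup>2 - \<kappa> s / \<mu> + \<rho>) * exp (\<mu> * \<kappa> s) = 0"
  shows "\<mu>\<^sup>2 * \<kappa>'' + \<mu> ^ 3 * (\<kappa>' s)\<^sup>2 + \<mu> * (\<kappa> s)\<^sup>2 - \<kappa> s + \<rho> * \<mu> = 0"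
proof -
  have "(\<mu> * (\<kappa>'' + \<mu> * (\<kappa>' s)\<^sup>2) + ((\<kappa> s)\<^sup>2 - \<kappa> s / \<mu> + \<rho>)) * exp (\<mu> * \<kappa> s) = 0"
    using assms(6) deriv2_exp_scaled[OF assms(2-5)] by (simp add: algebra_simps)
  then have "\<mu> * (\<kappa>'' + \<mu> * (\<kappa>' s)\<^sup>2) + ((\<kappa> s)\<^sup>2 - \<kappa> s / \<mu> + \<rho>) = 0"
    by simp
  moreover have "\<mu>\<^sup>2 * \<kappa>'' + \<mu> ^ 3 * (\<kappa>' s)\<^sup>2 + \<mu> * (\<kappa> s)\<^sup>2 - \<kappa> s + \<rho> * \<mu>
      = \<mu> * (\<mu> * (\<kappa>'' + \<mu> * (\<kappa>' s)\<^sup>2) + ((\<kappa> s)\<^sup>2 - \<kappa> s / \<mu> + \<rho>))"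
    using assms(1) by (simp add: algebra_simps power2_eq_square power3_eq_cube)
  ultimately show ?thesis
    by simp
qed

definition curvature_energy :: "real \<Rightarrow> real \<Rightarrow> (real \<Rightarrow> real) \<Rightarrow> (real \<Rightarrow> real) \<Rightarrow> real \<Rightarrow> real"
  where "curvature_energy \<mu> \<rho> \<kappa> \<kappa>' s =
    exp (2 * \<mu> * \<kappa> s) * (\<mu> ^ 4 * (\<kappa>' s)\<^sup>2 + (\<mu> * \<kappa> s - 1)\<^sup>2 + \<rho> * \<mu>\<^sup>2)"

lemma curvature_energy_has_derivative:
  fixes \<mu> \<rho> :: real and \<kappa> \<kappa>' :: "real \<Rightarrow> real" and \<kappa>'' :: real
  assumes "(\<kappa> has_real_derivative \<kappa>' s) (at s)" "(\<kappa>' has_real_derivative \<kappa>'') (at s)"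
  shows "(curvature_energy \<mu> \<rho> \<kappa> \<kappa>' has_real_derivative
           2 * \<mu>\<^sup>2 * \<kappa>' s * exp (2 * \<mu> * \<kappa> s) *
             (\<mu>\<^sup>2 * \<kappa>'' + \<mu> ^ 3 * (\<kappa>' s)\<^sup>2 + \<mu> * (\<kappa> s)\<^sup>2 - \<kappa> s + \<rho> * \<mu>)) (at s)"
proof -
  have "(curvature_energy \<mu> \<rho> \<kappa> \<kappa>' has_real_derivative
          exp (2 * \<mu> * \<kappa> s) * (2 * \<mu> * \<kappa>' s) * (\<mu> ^ 4 * (\<kappa>' s)\<^sup>2 + (\<mu> * \<kappa> s - 1)\<^sup>2 + \<rho> * \<mu>\<^sup>2)
          + exp (2 * \<mu> * \<kappa> s) * (\<mu> ^ 4 * (2 * \<kappa>' s * \<kappa>'') + 2 * (\<mu> * \<kappa> s - 1) * (\<mu> * \<kappa>' s)))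
          (at s)"
    unfolding curvature_energy_def [abs_def]
    by (rule derivative_eq_intros assms refl | simp)+
  then show ?thesis
    by (simp add: algebra_simps power2_eq_square power3_eq_cube power4_eq_xxxx)
qed

theorem proposition2p5:
  fixes \<mu> \<rho> :: real and \<kappa> \<kappa>' :: "real \<Rightarrow> real" and I :: "real set"
  assumes mu: "\<mu> \<noteq> 0"
    and I: "open I" "connected I"
    and d1: "\<And>s. s \<in> I \<Longrightarrow> (\<kappa> has_real_derivative \<kappa>' s) (at s)"
    and d2: "\<And>s. s \<in> I \<Longrightarrow> \<kappa>' differentiable (at s)"
    and nonconst: "\<exists>s\<in>I. \<exists>t\<in>I. \<kappa> s \<noteq> \<kappa> t"
    and ode: "\<And>s. s \<in> I \<Longrightarrow>
       deriv (deriv (\<lambda>t. exp (\<mu> * \<kappa> t))) s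
         + ((\<kappa> s)\<^sup>2 - \<kappa> s / \<mu> + \<rho>) * exp (\<mu> * \<kappa> s) = 0"
  shows "\<exists>d::real. \<forall>s\<in>I.
     \<mu> ^ 4 * (\<kappa>' s)\<^sup>2 = d * exp (- 2 * \<mu> * \<kappa> s) - (\<mu> * \<kappa> s - 1)\<^sup>2 - \<rho> * \<mu>\<^sup>2"
proof -
  have d2': "(\<kappa>' has_real_derivative deriv \<kappa>' s) (at s)" if "s \<in> I" for s
    using d2[OF that] DERIV_deriv_iff_real_differentiable by blast
  have reduced: "\<mu>\<^sup>2 * deriv \<kappa>' s + \<mu> ^ 3 * (\<kappa>' s)\<^sup>2 + \<mu> * (\<kappa> s)\<^sup>2 - \<kappa> s + \<rho> * \<mu> = 0"
    if "s \<in> I" for s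
    using reduce_curvature_ode[OF mu I(1) that d1 d2'[OF that] ode[OF that]] .
  have "(curvature_energy \<mu> \<rho> \<kappa> \<kappa>' has_real_derivative 0) (at s)" if "s \<in> I" for s
    using curvature_energy_has_derivative[where \<mu>=\<mu> and \<rho>=\<rho>,
        OF d1[OF that] d2'[OF that]]
      reduced[OF that] by simp
  then obtain d where d: "\<And>s. s \<in> I \<Longrightarrow> curvature_energy \<mu> \<rho> \<kappa> \<kappa>' s = d"
    using DERIV_zero_connected_constant[of I "{}"] I
    by (metis DERIV_isCont continuous_at_imp_continuous_on finite.emptyI Diff_empty)
  have "\<mu> ^ 4 * (\<kappa>' s)\<^sup>2 + (\<mu> * \<kappa> s - 1)\<^sup>2 + \<rho> * \<mu>\<^sup>2 = d * exp (- 2 * \<mu> * \<kappa> s)" if "s \<in> I" for s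
    using d[OF that] by (auto simp: curvature_energy_def exp_minus field_simps)
  then show ?thesis
    by (intro exI[of _ d]) (auto simp: algebra_simps)
qed

end
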